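(* Let $X$ be a real normed space, $f:X\to\mathbb R\cup\{+\infty\}$ proper, $\bar x\in(\partial f)^{-1}(0)$, and $p,q\in(1,\infty)$ with $p^{-1}+q^{-1}=1$. Suppose $(\partial f)^{-1}:X^*\rightrightarrows X$ is lower hemicontinuous at $0$. Then the following are equivalent: (i) there exist $\delta\in(0,+\infty]$ and $\gamma\in(0,+\infty)$ such that $f(x)\ge f(\bar x)+\gamma\|x-\bar x\|^p$ for all $x\in\mathbb B(\bar x,\delta)$; (ii) $\partial f:X\rightrightarrows X^*$ is strongly $\frac qp$-subregular at $\bar x$ (for some parameters $\alpha\in(0,+\infty]$, $\kappa\in(0,+\infty)$).
   Context: $\partial f(x):=\{\xi\in X^*: x\text{ is a global minimizer of } f-\langle\xi,\cdot\rangle\}$; $(\partial f)^{-1}(\xi)=\{x:\xi\in\partial f(x)\}$. $\mathbb B(x,+\infty)=X$. A set-valued map $\mathcal F:X\rightrightarrows Y$ is lower hemicontinuous at $\bar y$ if for every open $V$ with $\mathcal F(\bar y)\cap V\ne\emptyset$ there is a neighborhood $U$ of $\bar y$ with $\mathcal F(y)\cap V\neq\emptyset$ for all $y\in U$. $\mathcal F$ is strongly $\lambda$-subregular at $\bar x\in\mathcal F^{-1}(0)$ with parameters $\alpha\in(0,+\infty]$, $\kappa\in(0,+\infty)$ if $\|x-\bar x\|\le\kappa\, d(0,\mathcal F(x))^\lambda$ for all $x\in\mathbb B(\bar x,\alpha)$, where $d(0,\mathcal F(x))=\inf\{\|y\|:y\in\mathcal F(x)\}$. *)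

theory Defs
  imports "HOL-Analysis.Analysis"
begin

text \<open>Extended-real valued functions; the dual space X* is the space of bounded
linear functionals (blinfun, a to real) with the operator norm.\<close>

definition proper_fun :: "('a \<Rightarrow> ereal) \<Rightarrow> bool" where
  "proper_fun f \<longleftrightarrow> (\<forall>x. f x \<noteq> -\<infinity>) \<and> (\<exists>x. f x \<noteq> \<infinity>)"

definition subdiff :: "('a::real_normed_vector \<Rightarrow> ereal) \<Rightarrow> 'a \<Rightarrow> ('a \<Rightarrow>\<^sub>L real) set" where
  "subdiff f x = {\<xi>. \<forall>y. f x - ereal (blinfun_apply \<xi> x) \<le> f y - ereal (blinfun_apply \<xi> y)}"

definition inv_setmap :: "('a \<Rightarrow> 'b set) \<Rightarrow> 'b \<Rightarrow> 'a set" where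
  "inv_setmap F y = {x. y \<in> F x}"

text \<open>Ball with radius in (0, +infinity]; radius +infinity gives the whole space.\<close>
definition eball :: "'a::metric_space \<Rightarrow> ereal \<Rightarrow> 'a set" where
  "eball x r = {y. ereal (dist y x) \<le> r}"

definition lower_hemicontinuous_at :: "('b::topological_space \<Rightarrow> 'a::topological_space set) \<Rightarrow> 'b \<Rightarrow> bool" where
  "lower_hemicontinuous_at F y0 \<longleftrightarrow>
     (\<forall>V. open V \<and> F y0 \<inter> V \<noteq> {} \<longrightarrow>
        (\<exists>U. open U \<and> y0 \<in> U \<and> (\<forall>y\<in>U. F y \<inter> V \<noteq> {})))"

text \<open>Strong lambda-subregularity; d(0,F x) = inf of norms, = +infinity if F x is empty
  (then the inequality holds trivially).\<close>
definition strongly_subregular ::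
  "('a::real_normed_vector \<Rightarrow> 'b::real_normed_vector set) \<Rightarrow> 'a \<Rightarrow> real \<Rightarrow> ereal \<Rightarrow> real \<Rightarrow> bool" where
  "strongly_subregular F xbar lam \<alpha> \<kappa> \<longleftrightarrow>
     0 \<in> F xbar \<and>
     (\<forall>x\<in>eball xbar \<alpha>. F x = {} \<or> norm (x - xbar) \<le> \<kappa> * (Inf (norm ` F x)) powr lam)"

end

theory Submission
  imports Defs
begin

text \<open>With \<open>\<lambda> = q/p = 1/(p-1)\<close>, both directions compare the growth exponent \<open>p\<close>
  with the slope exponent \<open>p - 1\<close> of the subgradients.
  (i) \<open>\<Longrightarrow>\<close> (ii): a subgradient \<open>\<xi>\<close> at \<open>x\<close> satisfies
  \<open>\<gamma> \<parallel>x - x\<^sub>0\<parallel>\<^sup>p \<le> f x - f x\<^sub>0 \<le> \<xi>(x - x\<^sub>0) \<le> \<parallel>\<xi>\<parallel> \<parallel>x - x\<^sub>0\<parallel>\<close>, so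
  \<open>\<parallel>x - x\<^sub>0\<parallel>\<^sup>p\<^sup>-\<^sup>1 \<le> \<parallel>\<xi>\<parallel>/\<gamma>\<close>.
  (ii) \<open>\<Longrightarrow>\<close> (i): given \<open>x\<close> at distance \<open>r\<close>, take a norming functional of \<open>x - x\<^sub>0\<close>
  (Hahn-Banach) scaled to norm \<open>s = (r/2\<kappa>)\<^sup>p\<^sup>-\<^sup>1\<close>. Lower hemicontinuity makes it a
  subgradient at some \<open>z\<close> near \<open>x\<^sub>0\<close>, subregularity puts \<open>z\<close> within \<open>r/2\<close> of \<open>x\<^sub>0\<close>, and
  the subgradient inequality at \<open>z\<close> together with minimality of \<open>x\<^sub>0\<close> gives
  \<open>f x \<ge> f x\<^sub>0 + s r/2\<close>, which is of order \<open>r\<^sup>p\<close>.\<close>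

text \<open>Hahn-Banach for the norm, proved via Zorn's lemma on graphs of partial linear
  functionals that are dominated by the norm and attain it at \<open>v\<close>.\<close>

definition norming_graph :: "'a::real_normed_vector \<Rightarrow> ('a \<times> real) set \<Rightarrow> bool" where
  "norming_graph v G \<longleftrightarrow>
     (\<forall>x a b. (x, a) \<in> G \<longrightarrow> (x, b) \<in> G \<longrightarrow> a = b)
   \<and> (\<forall>x a y b. (x, a) \<in> G \<longrightarrow> (y, b) \<in> G \<longrightarrow> (x + y, a + b) \<in> G)
   \<and> (\<forall>x a c. (x, a) \<in> G \<longrightarrow> (c *\<^sub>R x, c * a) \<in> G)
   \<and> (\<forall>x a. (x, a) \<in> G \<longrightarrow> a \<le> norm x)
   \<and> (v, norm v) \<in> G"

lemma norming_graph_span: "norming_graph v {(c *\<^sub>R v, c * norm v) | c. True}"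
  (is "norming_graph v ?G")
  unfolding norming_graph_def
proof (intro conjI allI impI)
  fix x a b assume "(x, a) \<in> ?G" "(x, b) \<in> ?G"
  then obtain c d where "x = c *\<^sub>R v" "x = d *\<^sub>R v" "a = c * norm v" "b = d * norm v"
    by blast
  then show "a = b" by (cases "v = 0") (auto simp: scaleR_cancel_right)
next
  fix x a y b assume "(x, a) \<in> ?G" "(y, b) \<in> ?G"
  then obtain c d where "x = c *\<^sub>R v" "a = c * norm v" "y = d *\<^sub>R v" "b = d * norm v"
    by blast
  then have "x + y = (c + d) *\<^sub>R v" "a + b = (c + d) * norm v"
    by (auto simp: algebra_simps)
  then show "(x + y, a + b) \<in> ?G" by blast
next
  fix x a e assume "(x, a) \<in> ?G"
  then obtain c where "x = c *\<^sub>R v" "a = c * norm v" by blast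
  then have "e *\<^sub>R x = (e * c) *\<^sub>R v" "e * a = (e * c) * norm v" by auto
  then show "(e *\<^sub>R x, e * a) \<in> ?G" by blast
next
  fix x a assume "(x, a) \<in> ?G"
  then show "a \<le> norm x" by (auto simp: mult_right_mono)
next
  have "v = 1 *\<^sub>R v" "norm v = 1 * norm v" by auto
  then show "(v, norm v) \<in> ?G" by blast
qed

lemma norming_graph_Union:
  assumes C: "C \<in> chains {G. norming_graph v G}" "C \<noteq> {}"
  shows "norming_graph v (\<Union>C)"
proof -
  have sub: "\<And>G. G \<in> C \<Longrightarrow> norming_graph v G"
    using C by (auto simp: chains_def)
  have two: "\<exists>G\<in>C. P \<in> G \<and> P' \<in> G" if "P \<in> \<Union>C" "P' \<in> \<Union>C" for P P'
  proof -
    from that obtain A B where "A \<in> C" "B \<in> C" "P \<in> A" "P' \<in> B" by auto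
    moreover have "A \<subseteq> B \<or> B \<subseteq> A"
      using C \<open>A \<in> C\<close> \<open>B \<in> C\<close> by (auto simp: chains_def chain_subset_def)
    ultimately show ?thesis by blast
  qed
  obtain G0 where "G0 \<in> C" using C by auto
  show ?thesis unfolding norming_graph_def
  proof (intro conjI allI impI)
    fix x a b assume "(x, a) \<in> \<Union>C" "(x, b) \<in> \<Union>C"
    then obtain G where "G \<in> C" "(x, a) \<in> G" "(x, b) \<in> G" using two by blast
    then show "a = b" using sub unfolding norming_graph_def by blast
  next
    fix x a y b assume "(x, a) \<in> \<Union>C" "(y, b) \<in> \<Union>C"
    then obtain G where "G \<in> C" "(x, a) \<in> G" "(y, b) \<in> G" using two by blast
    then show "(x + y, a + b) \<in> \<Union>C" using sub unfolding norming_graph_def by blast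
  next
    fix x a c assume "(x, a) \<in> \<Union>C"
    then show "(c *\<^sub>R x, c * a) \<in> \<Union>C" using sub unfolding norming_graph_def by blast
  next
    fix x a assume "(x, a) \<in> \<Union>C"
    then show "a \<le> norm x" using sub unfolding norming_graph_def by blast
  next
    show "(v, norm v) \<in> \<Union>C" using \<open>G0 \<in> C\<close> sub unfolding norming_graph_def by blast
  qed
qed

lemma norming_graph_adjoin_bound:
  fixes M :: "('a::real_normed_vector \<times> real) set"
  assumes scale: "\<And>x a c. (x, a) \<in> M \<Longrightarrow> (c *\<^sub>R x, c * a) \<in> M"
    and dominated: "\<And>x a. (x, a) \<in> M \<Longrightarrow> a \<le> norm x"
    and lower: "\<And>x a. (x, a) \<in> M \<Longrightarrow> a - norm (x - w) \<le> t"
    and upper: "\<And>x a. (x, a) \<in> M \<Longrightarrow> t \<le> norm (x + w) - a"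
    and xa: "(x, a) \<in> M"
  shows "a + c * t \<le> norm (x + c *\<^sub>R w)"
proof (cases c "0::real" rule: linorder_cases)
  case less
  define d where "d = - c"
  have d: "d > 0" using less by (simp add: d_def)
  have "d *\<^sub>R (inverse d *\<^sub>R x - w) = x + c *\<^sub>R w"
    using d by (simp add: d_def algebra_simps)
  then have "a - norm (x + c *\<^sub>R w) = d * (inverse d * a - norm (inverse d *\<^sub>R x - w))"
    using d by (metis norm_scaleR abs_of_pos right_diff_distrib mult.assoc
        right_inverse mult_1 less_irrefl)
  also have "\<dots> \<le> d * t"
    using lower[OF scale[OF xa]] d by (simp add: mult_left_mono)
  finally show ?thesis by (simp add: d_def)
next
  case equal
  then show ?thesis using dominated[OF xa] by simp
next
  case greater
  have "c *\<^sub>R (inverse c *\<^sub>R x + w) = x + c *\<^sub>R w"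
    using greater by (simp add: algebra_simps)
  then have "norm (x + c *\<^sub>R w) - a = c * (norm (inverse c *\<^sub>R x + w) - inverse c * a)"
    using greater by (metis norm_scaleR abs_of_pos right_diff_distrib mult.assoc
        right_inverse mult_1 less_irrefl)
  also have "\<dots> \<ge> c * t"
    using upper[OF scale[OF xa]] greater by (simp add: mult_left_mono)
  finally show ?thesis by simp
qed

lemma norming_graph_adjoin:
  assumes M: "norming_graph v M" and w: "\<forall>a. (w, a) \<notin> M"
    and lower: "\<And>x a. (x, a) \<in> M \<Longrightarrow> a - norm (x - w) \<le> t"
    and upper: "\<And>x a. (x, a) \<in> M \<Longrightarrow> t \<le> norm (x + w) - a"
  shows "norming_graph v {(x + c *\<^sub>R w, a + c * t) | x a c. (x, a) \<in> M}"
    (is "norming_graph v ?G")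
proof -
  have Mf: "\<And>x a b. (x, a) \<in> M \<Longrightarrow> (x, b) \<in> M \<Longrightarrow> a = b"
   and Ma: "\<And>x a y b. (x, a) \<in> M \<Longrightarrow> (y, b) \<in> M \<Longrightarrow> (x + y, a + b) \<in> M"
   and Ms: "\<And>x a c. (x, a) \<in> M \<Longrightarrow> (c *\<^sub>R x, c * a) \<in> M"
   and Mn: "\<And>x a. (x, a) \<in> M \<Longrightarrow> a \<le> norm x"
   and Mv: "(v, norm v) \<in> M"
    using M unfolding norming_graph_def by blast+
  have unique: "c = c' \<and> x = x'"
    if "(x, a) \<in> M" "(x', a') \<in> M" "x + c *\<^sub>R w = x' + c' *\<^sub>R w" for x a x' a' c c'
  proof (cases "c = c'")
    case False
    have "(x' - x, a' - a) \<in> M" using Ma[OF that(2) Ms[OF that(1), of "-1"]] by simp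
    moreover have "x' - x = (c - c') *\<^sub>R w" using that(3) by (simp add: algebra_simps)
    then have "inverse (c - c') *\<^sub>R (x' - x) = w" using False by simp
    ultimately have "(w, inverse (c - c') * (a' - a)) \<in> M" using Ms by metis
    with w show ?thesis by blast
  qed (use that in simp)
  show ?thesis unfolding norming_graph_def
  proof (intro conjI allI impI)
    fix y a b assume "(y, a) \<in> ?G" "(y, b) \<in> ?G"
    then obtain x1 a1 c1 x2 a2 c2 where "(x1, a1) \<in> M" "(x2, a2) \<in> M"
      "y = x1 + c1 *\<^sub>R w" "a = a1 + c1 * t" "y = x2 + c2 *\<^sub>R w" "b = a2 + c2 * t"
      by blast
    then show "a = b" using unique[of x1 a1 x2 a2 c1 c2] Mf by auto
  next
    fix y a y' b assume "(y, a) \<in> ?G" "(y', b) \<in> ?G"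
    then obtain x1 a1 c1 x2 a2 c2 where "(x1, a1) \<in> M" "(x2, a2) \<in> M"
      "y = x1 + c1 *\<^sub>R w" "a = a1 + c1 * t" "y' = x2 + c2 *\<^sub>R w" "b = a2 + c2 * t"
      by blast
    moreover from calculation have "y + y' = (x1 + x2) + (c1 + c2) *\<^sub>R w"
      "a + b = (a1 + a2) + (c1 + c2) * t" by (auto simp: algebra_simps)
    ultimately show "(y + y', a + b) \<in> ?G" using Ma by blast
  next
    fix y a c assume "(y, a) \<in> ?G"
    then obtain x1 a1 c1 where "(x1, a1) \<in> M" "y = x1 + c1 *\<^sub>R w" "a = a1 + c1 * t"
      by blast
    moreover from calculation have "c *\<^sub>R y = c *\<^sub>R x1 + (c * c1) *\<^sub>R w"
      "c * a = c * a1 + (c * c1) * t" by (auto simp: algebra_simps)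
    ultimately show "(c *\<^sub>R y, c * a) \<in> ?G" using Ms by blast
  next
    fix y a assume "(y, a) \<in> ?G"
    then obtain x a1 c where "(x, a1) \<in> M" "y = x + c *\<^sub>R w" "a = a1 + c * t"
      by blast
    then show "a \<le> norm y"
      using norming_graph_adjoin_bound[of M w t, OF Ms Mn lower upper] by simp
  next
    have "(v + 0 *\<^sub>R w, norm v + 0 * t) \<in> ?G" using Mv by blast
    then show "(v, norm v) \<in> ?G" by simp
  qed
qed

text \<open>The admissible values \<open>t\<close> for the new direction \<open>w\<close> form a nonempty interval by the
  triangle inequality; its left end point is taken.\<close>

lemma norming_graph_extend:
  assumes M: "norming_graph v M" and w: "\<forall>a. (w, a) \<notin> M"
  shows "\<exists>G. norming_graph v G \<and> M \<subset> G"
proof -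
  have Ma: "\<And>x a y b. (x, a) \<in> M \<Longrightarrow> (y, b) \<in> M \<Longrightarrow> (x + y, a + b) \<in> M"
   and Mn: "\<And>x a. (x, a) \<in> M \<Longrightarrow> a \<le> norm x"
   and M0: "(0, 0) \<in> M"
    using M unfolding norming_graph_def by (blast, blast, metis mult_zero_left scaleR_zero_left)
  have sep: "a - norm (x - w) \<le> norm (y + w) - b" if "(x, a) \<in> M" "(y, b) \<in> M" for x a y b
  proof -
    have "a + b \<le> norm ((x - w) + (y + w))" using Mn[OF Ma[OF that]] by simp
    also have "\<dots> \<le> norm (x - w) + norm (y + w)" by (rule norm_triangle_ineq)
    finally show ?thesis by simp
  qed
  define S where "S = {a - norm (x - w) | x a. (x, a) \<in> M}"
  define t where "t = Sup S"
  have S_ne: "S \<noteq> {}" using M0 unfolding S_def by blast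
  have S_bdd: "bdd_above S" unfolding S_def bdd_above_def using sep[OF _ M0] by auto
  have lower: "a - norm (x - w) \<le> t" if "(x, a) \<in> M" for x a
    unfolding t_def by (rule cSup_upper[OF _ S_bdd]) (use that S_def in blast)
  have upper: "t \<le> norm (y + w) - b" if "(y, b) \<in> M" for y b
    unfolding t_def by (rule cSup_least[OF S_ne]) (use sep[OF _ that] S_def in blast)
  let ?G = "{(x + c *\<^sub>R w, a + c * t) | x a c. (x, a) \<in> M}"
  have "M \<subseteq> ?G"
  proof
    fix P assume "P \<in> M"
    moreover obtain x a where "P = (x, a)" by fastforce
    moreover have "(x + 0 *\<^sub>R w, a + 0 * t) \<in> ?G" if "(x, a) \<in> M" using that by blast
    ultimately show "P \<in> ?G" by simp
  qed
  moreover have "(w, t) \<in> ?G"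
  proof -
    have "(0 + 1 *\<^sub>R w, 0 + 1 * t) \<in> ?G" using M0 by blast
    then show ?thesis by simp
  qed
  ultimately show ?thesis using norming_graph_adjoin[OF M w lower upper] w by blast
qed

lemma exists_norming_functional:
  fixes v :: "'a::real_normed_vector"
  shows "\<exists>\<phi> :: 'a \<Rightarrow>\<^sub>L real. norm \<phi> \<le> 1 \<and> blinfun_apply \<phi> v = norm v"
proof -
  have "\<exists>U\<in>{G. norming_graph v G}. \<forall>X\<in>C. X \<subseteq> U"
    if "C \<in> chains {G. norming_graph v G}" for C
  proof (cases "C = {}")
    case True
    then show ?thesis using norming_graph_span by blast
  next
    case False
    then show ?thesis using norming_graph_Union[OF that] by blast
  qed
  from Zorn_Lemma2[OF ballI, OF this] obtain M where M: "norming_graph v M"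
    and max: "\<And>G. norming_graph v G \<Longrightarrow> M \<subseteq> G \<Longrightarrow> G = M" by blast
  have Mf: "\<And>x a b. (x, a) \<in> M \<Longrightarrow> (x, b) \<in> M \<Longrightarrow> a = b"
   and Ma: "\<And>x a y b. (x, a) \<in> M \<Longrightarrow> (y, b) \<in> M \<Longrightarrow> (x + y, a + b) \<in> M"
   and Ms: "\<And>x a c. (x, a) \<in> M \<Longrightarrow> (c *\<^sub>R x, c * a) \<in> M"
   and Mn: "\<And>x a. (x, a) \<in> M \<Longrightarrow> a \<le> norm x"
   and Mv: "(v, norm v) \<in> M"
    using M unfolding norming_graph_def by blast+
  have "\<exists>a. (y, a) \<in> M" for y
    using norming_graph_extend[OF M, of y] max by blast
  then obtain \<phi> where \<phi>: "\<And>y. (y, \<phi> y) \<in> M" by metis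
  have \<phi>_eq: "\<phi> y = a" if "(y, a) \<in> M" for y a using Mf[OF \<phi> that] .
  have \<phi>_le: "\<bar>\<phi> y\<bar> \<le> norm y" for y
    using Mn[OF \<phi>, of y] Mn[OF \<phi>, of "-y"] \<phi>_eq[OF Ms[OF \<phi>, of "-1" y]] by simp
  have lin: "bounded_linear \<phi>"
  proof (rule bounded_linear_intro[where K = 1])
    show "\<phi> (x + y) = \<phi> x + \<phi> y" for x y using \<phi>_eq[OF Ma[OF \<phi> \<phi>]] .
    show "\<phi> (r *\<^sub>R x) = r *\<^sub>R \<phi> x" for r x using \<phi>_eq[OF Ms[OF \<phi>]] by simp
    show "norm (\<phi> x) \<le> norm x * 1" for x using \<phi>_le by simp
  qed
  have "norm (Blinfun \<phi>) \<le> 1"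
    using \<phi>_le by (intro norm_blinfun_bound) (simp_all add: bounded_linear_Blinfun_apply[OF lin])
  moreover have "blinfun_apply (Blinfun \<phi>) v = norm v"
    using \<phi>_eq[OF Mv] by (simp add: bounded_linear_Blinfun_apply[OF lin])
  ultimately show ?thesis by blast
qed

lemma conjugate_exponent_ratio:
  fixes p q :: real
  assumes "p > 1" "1 / p + 1 / q = 1"
  shows "q / p = 1 / (p - 1)"
proof -
  have "q \<noteq> 0" using assms by auto
  have "1 / q = (p - 1) / p" using assms by (simp add: field_simps)
  then have "q = p / (p - 1)" using assms \<open>q \<noteq> 0\<close> by (simp add: field_simps)
  then show ?thesis using assms by (simp add: field_simps)
qed

lemma zero_in_subdiff_iff: "0 \<in> subdiff f x \<longleftrightarrow> (\<forall>y. f x \<le> f y)"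
  by (simp add: subdiff_def)

lemma proper_fun_minimum_finite:
  assumes "proper_fun f" "0 \<in> subdiff f xbar"
  obtains m where "f xbar = ereal m"
proof -
  obtain y where "f y \<noteq> \<infinity>" using assms(1) by (auto simp: proper_fun_def)
  moreover have "f xbar \<le> f y" "f xbar \<noteq> -\<infinity>"
    using assms by (auto simp: zero_in_subdiff_iff proper_fun_def)
  ultimately show ?thesis using that by (cases "f xbar") auto
qed

lemma subdiff_le: "\<xi> \<in> subdiff f x \<Longrightarrow> f x \<le> f y + ereal (blinfun_apply \<xi> (x - y))"
  unfolding subdiff_def blinfun.diff_right
  by (cases "f x"; cases "f y") (auto dest!: spec[of _ y])

lemma subdiff_growth_norm_ge:
  assumes "\<xi> \<in> subdiff f x" "f xbar = ereal m"
    and growth: "f xbar + ereal (\<gamma> * norm (x - xbar) powr p) \<le> f x"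
  shows "\<gamma> * norm (x - xbar) powr (p - 1) \<le> norm \<xi>"
proof (cases "x = xbar")
  case False
  define r where "r = norm (x - xbar)"
  have r: "r > 0" using False by (simp add: r_def)
  have "ereal (m + \<gamma> * r powr p) \<le> ereal (m + blinfun_apply \<xi> (x - xbar))"
    using order_trans[OF growth subdiff_le[OF assms(1), of xbar]] assms(2) by (simp add: r_def)
  then have "\<gamma> * r powr p \<le> blinfun_apply \<xi> (x - xbar)" by simp
  also have "\<dots> \<le> norm \<xi> * r"
    unfolding r_def by (metis abs_le_iff norm_blinfun real_norm_def)
  also have "r powr p = r powr (p - 1) * r"
    using r powr_add[of r "p - 1" 1] by simp
  finally have "(\<gamma> * r powr (p - 1)) * r \<le> norm \<xi> * r"
    by (simp add: mult.assoc)
  then show ?thesis using r by (simp add: r_def)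
qed simp

lemma growth_imp_strongly_subregular:
  fixes f :: "'a::real_normed_vector \<Rightarrow> ereal"
  assumes "proper_fun f" "0 \<in> subdiff f xbar" "p > 1" "\<gamma> > 0"
    and growth: "\<And>x. x \<in> eball xbar \<delta> \<Longrightarrow> f xbar + ereal (\<gamma> * norm (x - xbar) powr p) \<le> f x"
  shows "strongly_subregular (subdiff f) xbar (1 / (p - 1)) \<delta> ((1 / \<gamma>) powr (1 / (p - 1)))"
proof -
  obtain m where m: "f xbar = ereal m" using proper_fun_minimum_finite assms(1,2) .
  define lam where "lam = 1 / (p - 1)"
  have "norm (x - xbar) \<le> (1 / \<gamma>) powr lam * Inf (norm ` subdiff f x) powr lam"
    if x: "x \<in> eball xbar \<delta>" and ne: "subdiff f x \<noteq> {}" for x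
  proof -
    define r where "r = norm (x - xbar)"
    define I where "I = Inf (norm ` subdiff f x)"
    have "\<gamma> * r powr (p - 1) \<le> I"
      unfolding I_def r_def using ne subdiff_growth_norm_ge[OF _ m growth[OF x]]
      by (intro cInf_greatest) auto
    then have "(r powr (p - 1)) powr lam \<le> (I / \<gamma>) powr lam"
      using \<open>\<gamma> > 0\<close> \<open>p > 1\<close> by (intro powr_mono2) (auto simp: lam_def field_simps)
    moreover have "(r powr (p - 1)) powr lam = r"
      using \<open>p > 1\<close> by (simp add: powr_powr lam_def r_def)
    moreover have "I \<ge> 0" unfolding I_def using ne by (intro cInf_greatest) auto
    then have "(I / \<gamma>) powr lam = (1 / \<gamma>) powr lam * I powr lam"
      using \<open>\<gamma> > 0\<close> by (simp add: powr_divide powr_mult)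
    ultimately show ?thesis by (simp add: r_def I_def)
  qed
  then show ?thesis
    using assms(2) unfolding strongly_subregular_def lam_def by blast
qed

lemma lower_hemicontinuous_at_metric:
  fixes F :: "'b::metric_space \<Rightarrow> 'a::metric_space set"
  assumes "lower_hemicontinuous_at F y0" "x0 \<in> F y0" "e > 0"
  obtains d where "d > 0" "\<And>y. dist y y0 < d \<Longrightarrow> \<exists>x\<in>F y. dist x x0 < e"
proof -
  have "F y0 \<inter> ball x0 e \<noteq> {}" using assms(2,3) by auto
  then obtain U where "open U" "y0 \<in> U" and U: "\<And>y. y \<in> U \<Longrightarrow> F y \<inter> ball x0 e \<noteq> {}"
    using assms(1) open_ball unfolding lower_hemicontinuous_at_def by metis
  obtain d where "d > 0" "ball y0 d \<subseteq> U"
    using \<open>open U\<close> \<open>y0 \<in> U\<close> open_contains_ball by blast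
  show ?thesis
  proof (intro that[OF \<open>d > 0\<close>])
    fix y assume "dist y y0 < d"
    then have "y \<in> U" using \<open>ball y0 d \<subseteq> U\<close> by (auto simp: dist_commute)
    then obtain x where "x \<in> F y" "x \<in> ball x0 e" using U by blast
    then show "\<exists>x\<in>F y. dist x x0 < e" by (auto simp: dist_commute)
  qed
qed

lemma eball_contains_ball:
  assumes "0 < \<alpha>"
  obtains a where "a > 0" "ball x a \<subseteq> eball x \<alpha>"
proof (cases \<alpha>)
  case (real r)
  then show ?thesis
    using assms by (intro that[of r]) (auto simp: eball_def dist_commute)
next
  case PInf
  then show ?thesis using that[of 1] by (simp add: eball_def)
qed (use assms in simp)

lemma strongly_subregular_norm_le:
  assumes "strongly_subregular F xbar lam \<alpha> \<kappa>" "x \<in> eball xbar \<alpha>" "y \<in> F x"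
    and "lam \<ge> 0" "\<kappa> \<ge> 0"
  shows "norm (x - xbar) \<le> \<kappa> * norm y powr lam"
proof -
  have "norm (x - xbar) \<le> \<kappa> * Inf (norm ` F x) powr lam"
    using assms(1-3) unfolding strongly_subregular_def by blast
  also have "\<dots> \<le> \<kappa> * norm y powr lam"
  proof -
    have "Inf (norm ` F x) \<le> norm y"
      using assms(3) by (intro cInf_lower) (auto intro: bdd_belowI[where m = 0])
    moreover have "0 \<le> Inf (norm ` F x)"
      using assms(3) by (intro cInf_greatest) auto
    ultimately show ?thesis using assms(4,5) by (simp add: powr_mono2 mult_left_mono)
  qed
  finally show ?thesis .
qed

lemma strongly_subregular_small_subgradients:
  assumes "0 \<in> subdiff f xbar" "lower_hemicontinuous_at (inv_setmap (subdiff f)) 0" "\<alpha> > 0"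
    and subreg: "strongly_subregular (subdiff f) xbar lam \<alpha> \<kappa>" and "lam \<ge> 0" "\<kappa> \<ge> 0"
  obtains \<rho> where "\<rho> > 0"
    "\<And>\<xi>. norm \<xi> < \<rho> \<Longrightarrow> \<exists>z. \<xi> \<in> subdiff f z \<and> norm (z - xbar) \<le> \<kappa> * norm \<xi> powr lam"
proof -
  obtain a where "a > 0" and a: "ball xbar a \<subseteq> eball xbar \<alpha>"
    using eball_contains_ball \<open>\<alpha> > 0\<close> .
  obtain \<rho> where "\<rho> > 0" and \<rho>: "\<And>\<xi>. dist \<xi> 0 < \<rho> \<Longrightarrow> \<exists>z. \<xi> \<in> subdiff f z \<and> dist z xbar < a"
    using lower_hemicontinuous_at_metric[OF assms(2) _ \<open>a > 0\<close>, of xbar] assms(1)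
    by (auto simp: inv_setmap_def)
  show ?thesis
  proof (rule that[OF \<open>\<rho> > 0\<close>])
    fix \<xi> :: "'a \<Rightarrow>\<^sub>L real" assume "norm \<xi> < \<rho>"
    then obtain z where z: "\<xi> \<in> subdiff f z" "dist z xbar < a" using \<rho> by auto
    then have "z \<in> eball xbar \<alpha>" using a by (auto simp: dist_commute)
    then show "\<exists>z. \<xi> \<in> subdiff f z \<and> norm (z - xbar) \<le> \<kappa> * norm \<xi> powr lam"
      using strongly_subregular_norm_le[OF subreg _ z(1)] z(1) assms(5,6) by blast
  qed
qed

lemma subdiff_lower_bound_at_minimizer:
  assumes "0 \<in> subdiff f xbar" "\<xi> \<in> subdiff f z"
  shows "f xbar + ereal (blinfun_apply \<xi> (x - xbar) - norm \<xi> * norm (z - xbar)) \<le> f x"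
proof -
  have "blinfun_apply \<xi> (z - x) = blinfun_apply \<xi> (z - xbar) - blinfun_apply \<xi> (x - xbar)"
    by (simp add: blinfun.diff_right)
  also have "\<dots> \<le> norm \<xi> * norm (z - xbar) - blinfun_apply \<xi> (x - xbar)"
    by (metis abs_le_iff diff_right_mono norm_blinfun real_norm_def)
  finally have "f z \<le> f x + ereal (norm \<xi> * norm (z - xbar) - blinfun_apply \<xi> (x - xbar))"
    using subdiff_le[OF assms(2), of x] by (meson add_left_mono ereal_less_eq(3) order_trans)
  moreover have "f xbar \<le> f z" using assms(1) by (simp add: zero_in_subdiff_iff)
  ultimately have "f xbar \<le> f x + ereal (norm \<xi> * norm (z - xbar) - blinfun_apply \<xi> (x - xbar))"
    by (rule order_trans[rotated])
  then show ?thesis by (cases "f xbar"; cases "f x") auto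
qed

lemma subdiff_growth_from_aligned_subgradient:
  assumes "0 \<in> subdiff f xbar" "\<xi> \<in> subdiff f z" "norm \<xi> \<le> s"
    and aligned: "blinfun_apply \<xi> (x - xbar) = s * norm (x - xbar)"
    and near: "norm (z - xbar) \<le> norm (x - xbar) / 2"
  shows "f xbar + ereal (s * norm (x - xbar) / 2) \<le> f x"
proof -
  have "norm \<xi> * norm (z - xbar) \<le> s * (norm (x - xbar) / 2)"
    using mult_mono[OF assms(3) near] order_trans[OF norm_ge_zero assms(3)] by simp
  then have "s * norm (x - xbar) / 2 \<le> blinfun_apply \<xi> (x - xbar) - norm \<xi> * norm (z - xbar)"
    using aligned by simp
  then have "f xbar + ereal (s * norm (x - xbar) / 2)
      \<le> f xbar + ereal (blinfun_apply \<xi> (x - xbar) - norm \<xi> * norm (z - xbar))"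
    by (intro add_left_mono) simp
  then show ?thesis
    using subdiff_lower_bound_at_minimizer[OF assms(1,2), of x] by (rule order_trans)
qed

lemma strongly_subregular_imp_growth:
  fixes f :: "'a::real_normed_vector \<Rightarrow> ereal"
  assumes "0 \<in> subdiff f xbar" "lower_hemicontinuous_at (inv_setmap (subdiff f)) 0"
    and "p > 1" "\<alpha> > 0" "\<kappa> > 0"
    and subreg: "strongly_subregular (subdiff f) xbar (1 / (p - 1)) \<alpha> \<kappa>"
  obtains \<delta> where "\<delta> > 0"
    "\<And>x. x \<in> eball xbar (ereal \<delta>) \<Longrightarrow>
       f xbar + ereal ((2 * \<kappa>) powr (1 - p) / 2 * norm (x - xbar) powr p) \<le> f x"
proof -
  define lam where "lam = 1 / (p - 1)"
  have lam: "lam > 0" "(p - 1) * lam = 1" using \<open>p > 1\<close> by (auto simp: lam_def)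
  obtain \<rho> where "\<rho> > 0" and \<rho>:
    "\<And>\<xi>. norm \<xi> < \<rho> \<Longrightarrow> \<exists>z. \<xi> \<in> subdiff f z \<and> norm (z - xbar) \<le> \<kappa> * norm \<xi> powr lam"
    using strongly_subregular_small_subgradients[OF assms(1,2,4) subreg[folded lam_def]
        less_imp_le[OF lam(1)] less_imp_le[OF \<open>\<kappa> > 0\<close>]] by blast
  have "f xbar + ereal ((2 * \<kappa>) powr (1 - p) / 2 * norm (x - xbar) powr p) \<le> f x"
    if x: "x \<in> eball xbar (ereal (\<kappa> * \<rho> powr lam))" for x
  proof (cases "x = xbar")
    case False
    define r where "r = norm (x - xbar)"
    have "r > 0" using False by (simp add: r_def)
    obtain \<phi> where \<phi>: "norm \<phi> \<le> 1" "blinfun_apply \<phi> (x - xbar) = r"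
      using exists_norming_functional unfolding r_def by blast
    define s where "s = (r / (2 * \<kappa>)) powr (p - 1)"
    have "s > 0" using \<open>r > 0\<close> \<open>\<kappa> > 0\<close> by (simp add: s_def)
    have s_lam: "s powr lam = r / (2 * \<kappa>)"
      unfolding s_def using \<open>r > 0\<close> \<open>\<kappa> > 0\<close> lam by (simp add: powr_powr)
    have "norm (s *\<^sub>R \<phi>) \<le> s" using \<phi>(1) \<open>s > 0\<close> by (simp add: mult_left_le)
    have "r \<le> \<kappa> * \<rho> powr lam" using x by (simp add: eball_def dist_norm r_def)
    then have "s powr lam \<le> \<rho> powr lam / 2" using \<open>\<kappa> > 0\<close> by (simp add: s_lam field_simps)
    also have "\<dots> < \<rho> powr lam" using \<open>\<rho> > 0\<close> by simp
    finally have "s < \<rho>" using powr_less_cancel2[OF lam(1) \<open>s > 0\<close> \<open>\<rho> > 0\<close>] by blast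
    then have "norm (s *\<^sub>R \<phi>) < \<rho>" using \<open>norm (s *\<^sub>R \<phi>) \<le> s\<close> by linarith
    then obtain z where z: "s *\<^sub>R \<phi> \<in> subdiff f z"
      and z_near: "norm (z - xbar) \<le> \<kappa> * norm (s *\<^sub>R \<phi>) powr lam" using \<rho> by blast
    note z_near
    also have "\<dots> \<le> \<kappa> * s powr lam"
      using \<open>norm (s *\<^sub>R \<phi>) \<le> s\<close> \<open>\<kappa> > 0\<close> lam by (simp add: powr_mono2)
    finally have "norm (z - xbar) \<le> r / 2" using \<open>\<kappa> > 0\<close> by (simp add: s_lam)
    moreover have "blinfun_apply (s *\<^sub>R \<phi>) (x - xbar) = s * r"
      using \<phi>(2) by (simp add: blinfun.scaleR_left)
    ultimately have "f xbar + ereal (s * r / 2) \<le> f x"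
      using subdiff_growth_from_aligned_subgradient[OF assms(1) z \<open>norm (s *\<^sub>R \<phi>) \<le> s\<close>]
      unfolding r_def by blast
    moreover have "s * r = (2 * \<kappa>) powr (1 - p) * r powr p"
      using \<open>r > 0\<close> \<open>\<kappa> > 0\<close>
      by (simp add: s_def powr_divide powr_diff powr_minus_divide field_simps)
    ultimately show ?thesis by (simp add: r_def)
  qed simp
  moreover have "\<kappa> * \<rho> powr lam > 0" using \<open>\<rho> > 0\<close> \<open>\<kappa> > 0\<close> by simp
  ultimately show ?thesis using that by blast
qed

theorem corollary4p2:
  fixes f :: "'a::real_normed_vector \<Rightarrow> ereal" and xbar :: 'a and p q :: real
  assumes "proper_fun f"
    and "0 \<in> subdiff f xbar"
    and "p > 1" and "q > 1" and "1 / p + 1 / q = 1"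
    and "lower_hemicontinuous_at (inv_setmap (subdiff f)) 0"
  shows "(\<exists>\<delta>::ereal. \<delta> > 0 \<and> (\<exists>\<gamma>::real. \<gamma> > 0 \<and>
            (\<forall>x\<in>eball xbar \<delta>. f x \<ge> f xbar + ereal (\<gamma> * norm (x - xbar) powr p))))
     \<longleftrightarrow> (\<exists>\<alpha>::ereal. \<alpha> > 0 \<and> (\<exists>\<kappa>::real. \<kappa> > 0 \<and>
            strongly_subregular (subdiff f) xbar (q / p) \<alpha> \<kappa>))"
proof -
  have ratio: "q / p = 1 / (p - 1)" using conjugate_exponent_ratio assms(3,5) .
  show ?thesis unfolding ratio
  proof (intro iffI; elim exE conjE)
    fix \<delta> :: ereal and \<gamma> :: real
    assume "\<delta> > 0" "\<gamma> > 0"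
      and "\<forall>x\<in>eball xbar \<delta>. f xbar + ereal (\<gamma> * norm (x - xbar) powr p) \<le> f x"
    then have "strongly_subregular (subdiff f) xbar (1 / (p - 1)) \<delta> ((1 / \<gamma>) powr (1 / (p - 1)))"
      using growth_imp_strongly_subregular[OF assms(1-3)] by blast
    moreover have "(1 / \<gamma>) powr (1 / (p - 1)) > 0" using \<open>\<gamma> > 0\<close> by simp
    ultimately show "\<exists>\<alpha>>0. \<exists>\<kappa>>0. strongly_subregular (subdiff f) xbar (1 / (p - 1)) \<alpha> \<kappa>"
      using \<open>\<delta> > 0\<close> by blast
  next
    fix \<alpha> :: ereal and \<kappa> :: real
    assume "\<alpha> > 0" "\<kappa> > 0" "strongly_subregular (subdiff f) xbar (1 / (p - 1)) \<alpha> \<kappa>"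
    then obtain \<delta> where "\<delta> > 0" and "\<forall>x\<in>eball xbar (ereal \<delta>).
        f xbar + ereal ((2 * \<kappa>) powr (1 - p) / 2 * norm (x - xbar) powr p) \<le> f x"
      using strongly_subregular_imp_growth assms(2,6,3) by metis
    moreover have "(2 * \<kappa>) powr (1 - p) / 2 > 0" using \<open>\<kappa> > 0\<close> by simp
    ultimately show "\<exists>\<delta>>0. \<exists>\<gamma>>0. \<forall>x\<in>eball xbar \<delta>. f xbar + ereal (\<gamma> * norm (x - xbar) powr p) \<le> f x"
      by (metis ereal_less(2))
  qed
qed

end
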